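(* Let $\mathcal{F}$ be a finite subcollection of $\mathcal{M}(\mathbb{D})$. A composition sequence $F_n=f_1\cdots f_n$ generated by $\mathcal{F}$ is of limit-disc type if and only if both of the following hold: (i) $\alpha_{f_{n-1}}=\beta_{f_n}$ for all but finitely many positive integers $n$; (ii) $\displaystyle\sum_{n=1}^\infty \gamma_{f_1}\gamma_{f_2}\cdots\gamma_{f_n}<+\infty$.
   Context: $\mathbb{D}$ is the open unit disc. $\mathcal{M}(\mathbb{D})$ denotes the set of Möbius transformations $f$ of $\overline{\mathbb{C}}$ with $f(\mathbb{D})\subset\mathbb{D}$ and $f(\mathbb{D})\neq\mathbb{D}$. A composition sequence generated by $\mathcal{F}$ is $(F_n)$ with $F_n=f_1\cdots f_n$, each $f_i\in\mathcal{F}$; it is of limit-disc type if $\bigcap_n F_n(\overline{\mathbb{D}})$ is a closed disc of positive radius (rather than a single point). For $f\in\mathcal{M}(\mathbb{D})$: either $f(\mathbb{D})$ is internally tangent to $\mathbb{D}$ at a unique point, in which case $\alpha_f,\beta_f$ are the unique points of $\partial\mathbb{D}$ with $f(\alpha_f)=\beta_f$; or $\partial f(\mathbb{D})\cap\partial\mathbb{D}=\emptyset$, in which case $\alpha_f=0$ and $\beta_f=\infty$. Define $\gamma_f=1/|f'(\alpha_f)|$. *)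

theory Defs
  imports "HOL-Analysis.Analysis"
begin

text \<open>The extended complex plane is modelled as complex option, None being infinity.\<close>

type_synonym mob = "complex \<times> complex \<times> complex \<times> complex"

definition mob_ok :: "mob \<Rightarrow> bool" where
  "mob_ok m = (case m of (a,b,c,d) \<Rightarrow> a*d - b*c \<noteq> 0)"

fun mob_apply :: "mob \<Rightarrow> complex option \<Rightarrow> complex option" where
  "mob_apply (a,b,c,d) (Some z) =
     (if c*z + d = 0 then None else Some ((a*z + b)/(c*z + d)))"
| "mob_apply (a,b,c,d) None = (if c = 0 then None else Some (a/c))"

fun mob_deriv :: "mob \<Rightarrow> complex \<Rightarrow> complex" where
  "mob_deriv (a,b,c,d) z = (a*d - b*c) / (c*z + d)^2"

abbreviation disc :: "complex option set" where
  "disc \<equiv> Some ` ball 0 1"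

abbreviation cdisc :: "complex option set" where
  "cdisc \<equiv> Some ` cball 0 1"

definition MD :: "mob set" where
  "MD = {m. mob_ok m \<and> mob_apply m ` disc \<subseteq> disc \<and> mob_apply m ` disc \<noteq> disc}"

text \<open>f(D) is internally tangent to D: the boundary of f(D), i.e. f(unit circle),
meets the unit circle.\<close>
definition tangent :: "mob \<Rightarrow> bool" where
  "tangent m = (\<exists>z. cmod z = 1 \<and> mob_apply m (Some z) \<in> Some ` sphere 0 1)"

definition alpha :: "mob \<Rightarrow> complex" where
  "alpha m = (if tangent m
              then (THE z. cmod z = 1 \<and> mob_apply m (Some z) \<in> Some ` sphere 0 1)
              else 0)"

definition beta :: "mob \<Rightarrow> complex option" where
  "beta m = (if tangent m then mob_apply m (Some (alpha m)) else None)"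

definition gamma :: "mob \<Rightarrow> real" where
  "gamma m = 1 / cmod (mob_deriv m (alpha m))"

fun comp_seq :: "(nat \<Rightarrow> mob) \<Rightarrow> nat \<Rightarrow> complex option \<Rightarrow> complex option" where
  "comp_seq f 0 = id"
| "comp_seq f (Suc n) = comp_seq f n \<circ> mob_apply (f (Suc n))"

definition limit_disc_type :: "(nat \<Rightarrow> mob) \<Rightarrow> bool" where
  "limit_disc_type f =
     (\<exists>c r. r > 0 \<and> (\<Inter>n\<in>{1..}. comp_seq f n ` cdisc) = Some ` cball c r)"

end

theory Submission
  imports Defs
begin

text \<open>Identify a Moebius map with its matrix \<open>(a,b,c,d)\<close> and let \<open>(p\<^sub>n, q\<^sub>n)\<close> be the
bottom row of the matrix product \<open>P\<^sub>n\<close> of \<open>f\<^sub>1, \<dots>, f\<^sub>n\<close>. Then \<open>F\<^sub>n\<close> maps the closed unit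
disc onto a closed disc of radius \<open>1 / g\<^sub>n\<close>, where \<open>g\<^sub>n = (|q\<^sub>n|\<^sup>2 - |p\<^sub>n|\<^sup>2) / |det P\<^sub>n|\<close>;
these discs are nested, so the sequence is of limit-disc type iff \<open>g\<^sub>n\<close> is bounded.
The increment \<open>g\<^sub>n\<^sub>+\<^sub>1 - g\<^sub>n\<close> is a Hermitian form in \<open>(p\<^sub>n, q\<^sub>n)\<close>: positive semidefinite
because \<open>f\<^sub>n\<^sub>+\<^sub>1(\<D>) \<subseteq> \<D>\<close>, definite unless \<open>f\<^sub>n\<^sub>+\<^sub>1\<close> is tangent, and for tangent \<open>f\<^sub>n\<^sub>+\<^sub>1\<close>
a multiple of \<open>|p\<^sub>n \<beta> + q\<^sub>n|\<^sup>2\<close> with \<open>\<beta> = \<beta>\<^sub>f\<^sub>n\<^sub>+\<^sub>1\<close>. So every mismatch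
\<open>\<alpha>\<^sub>f\<^sub>n \<noteq> \<beta>\<^sub>f\<^sub>n\<^sub>+\<^sub>1\<close> multiplies \<open>g\<close> by at least \<open>1 + \<epsilon>\<close> over two steps, with \<open>\<epsilon>\<close>
uniform because \<open>\<F>\<close> is finite. Once all consecutive points match, the weights
\<open>|p\<^sub>n \<alpha>\<^sub>f\<^sub>n + q\<^sub>n|\<^sup>2 / |det P\<^sub>n|\<close> get multiplied by \<open>\<gamma>\<^sub>f\<^sub>n\<^sub>+\<^sub>1\<close> at each step, so the
increments of \<open>g\<close> are comparable to the products \<open>\<gamma>\<^sub>f\<^sub>1 \<cdots> \<gamma>\<^sub>f\<^sub>n\<close>.\<close>

section \<open>The circle equation of a Moebius map\<close>

fun mob_det :: "mob \<Rightarrow> complex" where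
  "mob_det (a,b,c,d) = a*d - b*c"

text \<open>If \<open>w = m(z)\<close> then \<open>dw - b = z (a - cw)\<close>, so \<open>|z|\<close> is \<open><\<close>, \<open>=\<close> or \<open>>\<close> 1 according as
\<open>|dw - b|\<^sup>2 - |a - cw|\<^sup>2 = s |w|\<^sup>2 - 2 Re (w cnj e) + h\<close> is \<open><\<close>, \<open>=\<close> or \<open>>\<close> 0, with the
following coefficients \<open>s\<close>, \<open>e\<close>, \<open>h\<close>.\<close>

fun circ_s :: "mob \<Rightarrow> real" where
  "circ_s (a,b,c,d) = (cmod d)^2 - (cmod c)^2"

fun circ_e :: "mob \<Rightarrow> complex" where
  "circ_e (a,b,c,d) = b * cnj d - a * cnj c"

fun circ_h :: "mob \<Rightarrow> real" where
  "circ_h (a,b,c,d) = (cmod b)^2 - (cmod a)^2"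

lemma circ_coeff_identity:
  "circ_h m * circ_s m - (cmod (circ_e m))^2 = - ((cmod (mob_det m))^2)"
proof -
  obtain a b c d where m: "m = (a,b,c,d)" by (cases m) auto
  have "complex_of_real (((cmod b)^2 - (cmod a)^2) * ((cmod d)^2 - (cmod c)^2)
          - (cmod (b * cnj d - a * cnj c))^2)
      = complex_of_real (- ((cmod (a*d - b*c))^2))"
    unfolding of_real_diff of_real_mult of_real_minus complex_norm_square
    by (simp add: algebra_simps)
  then have "((cmod b)^2 - (cmod a)^2) * ((cmod d)^2 - (cmod c)^2) - (cmod (b * cnj d - a * cnj c))^2
      = - ((cmod (a*d - b*c))^2)"
    using of_real_eq_iff by blast
  then show ?thesis unfolding m by simp
qed

lemma circ_equation:
  fixes a b c d w :: complex
  shows "(cmod (d*w - b))^2 - (cmod (a - c*w))^2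
       = circ_s (a,b,c,d) * (cmod w)^2 - 2 * Re (w * cnj (circ_e (a,b,c,d))) + circ_h (a,b,c,d)"
proof -
  have "complex_of_real ((cmod (d*w - b))^2 - (cmod (a - c*w))^2)
      = complex_of_real (((cmod d)^2 - (cmod c)^2) * (cmod w)^2
          - 2 * Re (w * cnj (b * cnj d - a * cnj c)) + ((cmod b)^2 - (cmod a)^2))"
    unfolding of_real_diff of_real_add complex_add_cnj[symmetric]
    unfolding of_real_mult of_real_diff complex_norm_square
    by (simp add: algebra_simps)
  then have "(cmod (d*w - b))^2 - (cmod (a - c*w))^2 = ((cmod d)^2 - (cmod c)^2) * (cmod w)^2
      - 2 * Re (w * cnj (b * cnj d - a * cnj c)) + ((cmod b)^2 - (cmod a)^2)"
    using of_real_eq_iff by blast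
  then show ?thesis by simp
qed

lemma norm_square_shift:
  fixes s :: real and w e :: complex
  assumes "s \<noteq> 0"
  shows "s * (cmod (w - e / complex_of_real s))^2 = s * (cmod w)^2 - 2 * Re (w * cnj e) + (cmod e)^2 / s"
proof -
  have "complex_of_real (s * (cmod (w - e / complex_of_real s))^2)
      = complex_of_real (s * (cmod w)^2 - 2 * Re (w * cnj e) + (cmod e)^2 / s)"
    unfolding of_real_diff of_real_add complex_add_cnj[symmetric]
    unfolding of_real_mult of_real_divide complex_norm_square
    using assms by (simp add: field_simps)
  then show ?thesis using of_real_eq_iff by blast
qed

lemma circ_equation_centered:
  fixes a b c d w :: complex
  assumes "circ_s (a,b,c,d) > 0"
  defines "s \<equiv> circ_s (a,b,c,d)"
  shows "(cmod (d*w - b))^2 - (cmod (a - c*w))^2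
       = s * (cmod (w - circ_e (a,b,c,d) / complex_of_real s))^2 - (cmod (a*d - b*c))^2 / s"
proof -
  have s0: "s \<noteq> 0" unfolding s_def using assms by linarith
  have "(cmod (circ_e (a,b,c,d)))^2 = circ_h (a,b,c,d) * s + (cmod (a*d - b*c))^2"
    using circ_coeff_identity[of "(a,b,c,d)"] unfolding s_def by simp
  then have "(cmod (circ_e (a,b,c,d)))^2 / s = circ_h (a,b,c,d) + (cmod (a*d - b*c))^2 / s"
    using s0 by (simp add: field_simps)
  then show ?thesis using circ_equation[of d w b a c] norm_square_shift[OF s0, of w "circ_e (a,b,c,d)"]
    unfolding s_def by simp
qed

definition image_center :: "mob \<Rightarrow> complex" where
  "image_center m = circ_e m / complex_of_real (circ_s m)"

definition image_radius :: "mob \<Rightarrow> real" where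
  "image_radius m = cmod (mob_det m) / circ_s m"

lemma circ_equation_ball_iff:
  fixes a b c d w :: complex
  assumes "circ_s (a,b,c,d) > 0"
  defines "Z \<equiv> image_center (a,b,c,d)" and "R \<equiv> image_radius (a,b,c,d)"
  shows "cmod (d*w - b) \<le> cmod (a - c*w) \<longleftrightarrow> cmod (w - Z) \<le> R"
    and "cmod (d*w - b) < cmod (a - c*w) \<longleftrightarrow> cmod (w - Z) < R"
    and "cmod (d*w - b) = cmod (a - c*w) \<longleftrightarrow> cmod (w - Z) = R"
proof -
  define s where "s = circ_s (a,b,c,d)"
  have s0: "s > 0" using assms s_def by simp
  have "s * R^2 = (cmod (a*d - b*c))^2 / s"
    unfolding R_def image_radius_def s_def[symmetric] using s0
    by (simp add: power_divide power2_eq_square)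
  then have P: "(cmod (d*w - b))^2 - (cmod (a - c*w))^2 = s * ((cmod (w - Z))^2 - R^2)"
    using circ_equation_centered[OF assms(1), of w]
    unfolding Z_def image_center_def s_def[symmetric] by (simp add: right_diff_distrib)
  have R0: "R \<ge> 0" using s0 unfolding R_def image_radius_def s_def[symmetric] by simp
  have sq1: "x \<le> y \<longleftrightarrow> x^2 \<le> y^2" if "x \<ge> 0" "y \<ge> 0" for x y :: real
    using that by (simp add: power_mono_iff)
  have sq2: "x < y \<longleftrightarrow> x^2 < y^2" if "x \<ge> 0" "y \<ge> 0" for x y :: real
    using that by (meson not_le sq1)
  have sq3: "x = y \<longleftrightarrow> x^2 = y^2" if "x \<ge> 0" "y \<ge> 0" for x y :: real
    using that by (simp add: power2_eq_iff_nonneg)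
  have "x \<le> 0 \<longleftrightarrow> y \<le> 0" "x < 0 \<longleftrightarrow> y < 0" "x = 0 \<longleftrightarrow> y = 0" if "x = s*y" for x y :: real
    using that s0 by (simp_all add: mult_le_0_iff mult_less_0_iff)
  note sign = this[OF P]
  show "cmod (d*w - b) \<le> cmod (a - c*w) \<longleftrightarrow> cmod (w - Z) \<le> R"
    using sq1[of "cmod (d*w - b)" "cmod (a - c*w)"] sq1[of "cmod (w - Z)" R] R0 sign(1) by simp
  show "cmod (d*w - b) < cmod (a - c*w) \<longleftrightarrow> cmod (w - Z) < R"
    using sq2[of "cmod (d*w - b)" "cmod (a - c*w)"] sq2[of "cmod (w - Z)" R] R0 sign(2) by simp
  show "cmod (d*w - b) = cmod (a - c*w) \<longleftrightarrow> cmod (w - Z) = R"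
    using sq3[of "cmod (d*w - b)" "cmod (a - c*w)"] sq3[of "cmod (w - Z)" R] R0 sign(3) by simp
qed

section \<open>Images of the unit disc and circle\<close>

lemma mob_ok_det: "mob_ok m \<longleftrightarrow> mob_det m \<noteq> 0"
  by (cases m) (simp add: mob_ok_def)

lemma no_pole_in_cdisc:
  assumes "circ_s (a,b,c,d) > 0" "cmod z \<le> 1"
  shows "c*z + d \<noteq> 0"
proof
  assume "c*z + d = 0"
  then have "d = - (c*z)" by (simp add: add_eq_0_iff2 add.commute)
  then have "cmod d = cmod c * cmod z" by (simp add: norm_mult)
  also have "\<dots> \<le> cmod c" using assms(2) by (simp add: mult_left_le)
  finally have "(cmod d)^2 \<le> (cmod c)^2" by (rule power_mono) simp
  moreover have "circ_s (a,b,c,d) = (cmod d)^2 - (cmod c)^2" by simp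
  ultimately show False using assms(1) by linarith
qed

lemma mob_apply_Some:
  fixes a b c d z :: complex
  assumes "mob_ok (a,b,c,d)" "c*z + d \<noteq> 0"
  obtains w where "mob_apply (a,b,c,d) (Some z) = Some w"
    "d*w - b = z * (a - c*w)" "a - c*w \<noteq> 0"
proof -
  let ?w = "(a*z + b)/(c*z + d)"
  have "d*?w - b = (a*d - b*c)*z/(c*z + d)" "a - c*?w = (a*d - b*c)/(c*z + d)"
    using assms(2) by (simp_all add: field_simps)
  then show ?thesis using that[of ?w] assms by (simp add: mob_ok_def)
qed

lemma mob_apply_inverse:
  fixes a b c d w :: complex
  assumes "mob_ok (a,b,c,d)" "a - c*w \<noteq> 0"
  shows "mob_apply (a,b,c,d) (Some ((d*w - b)/(a - c*w))) = Some w"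
proof -
  have den: "c * ((d*w - b)/(a - c*w)) + d = (a*d - b*c)/(a - c*w)"
    and num: "a * ((d*w - b)/(a - c*w)) + b = (a*d - b*c)*w/(a - c*w)"
    using assms(2) by (simp_all add: field_simps)
  show ?thesis using assms unfolding mob_apply.simps den num by (simp add: mob_ok_def)
qed

lemma mob_apply_inverse_eq:
  assumes "mob_ok (a,b,c,d)" "c*y + d \<noteq> 0" "mob_apply (a,b,c,d) (Some y) = Some w"
  shows "y = (d*w - b)/(a - c*w)"
proof -
  have "w = (a*y + b)/(c*y + d)" using assms(2,3) by simp
  then have "d*w - b = (a*d - b*c)*y/(c*y + d)" "a - c*w = (a*d - b*c)/(c*y + d)"
    using assms(2) by (simp_all add: field_simps)
  then show ?thesis using assms(1,2) by (simp add: mob_ok_def)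
qed

lemma mob_apply_inj:
  assumes "mob_ok m" "mob_apply m (Some x) = Some w" "mob_apply m (Some x') = Some w"
  shows "x = x'"
proof -
  obtain a b c d where M: "m = (a,b,c,d)" by (cases m) auto
  have "c*x + d \<noteq> 0" "c*x' + d \<noteq> 0" using assms(2,3) unfolding M by (auto split: if_splits)
  then show ?thesis using mob_apply_inverse_eq[of a b c d] assms unfolding M by metis
qed

lemma inverse_denom_nonzero:
  assumes "mob_ok (a,b,c,d)" "cmod (d*w - b) \<le> cmod (a - c*w)"
  shows "a - c*w \<noteq> 0"
proof
  assume h: "a - c*w = 0"
  then have "d*w - b = 0" using assms(2) by simp
  then have "a*d - b*c = 0" using h
    by (metis (no_types, lifting) eq_iff_diff_eq_0 mult.commute mult.left_commute)
  then show False using assms(1) by (simp add: mob_ok_def)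
qed

text \<open>The closed disc, open disc and circle at once: \<open>PQ\<close> says that the condition \<open>P\<close> on \<open>|z|\<close>
is the condition \<open>Q\<close> on \<open>(|dw - b|, |a - cw|) = (|z| |a - cw|, |a - cw|)\<close>.\<close>

lemma mob_image_level_set:
  assumes ok: "mob_ok (a,b,c,d)" and s: "circ_s (a,b,c,d) > 0"
    and PQ: "\<And>x y::real. x \<ge> 0 \<Longrightarrow> y > 0 \<Longrightarrow> Q (x*y) y \<longleftrightarrow> P x"
    and Q_le: "\<And>x y. Q x y \<Longrightarrow> x \<le> y"
    and QT: "\<And>w. Q (cmod (d*w - b)) (cmod (a - c*w)) \<longleftrightarrow> T w"
  shows "mob_apply (a,b,c,d) ` (Some ` {z. P (cmod z)}) = Some ` {w. T w}"
proof (intro equalityI subsetI)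
  fix x assume "x \<in> mob_apply (a,b,c,d) ` (Some ` {z. P (cmod z)})"
  then obtain z where z: "P (cmod z)" "x = mob_apply (a,b,c,d) (Some z)" by auto
  have "Q (cmod z * 1) 1" using PQ[of "cmod z" 1] z(1) by simp
  then have "cmod z \<le> 1" using Q_le by fastforce
  then obtain w where w: "mob_apply (a,b,c,d) (Some z) = Some w"
    "d*w - b = z * (a - c*w)" "a - c*w \<noteq> 0"
    using mob_apply_Some[OF ok no_pole_in_cdisc[OF s]] by metis
  have "Q (cmod (d*w - b)) (cmod (a - c*w))" unfolding w(2) norm_mult
    using PQ[of "cmod z" "cmod (a - c*w)"] z(1) w(3) by simp
  then show "x \<in> Some ` {w. T w}" using QT z(2) w(1) by simp
next
  fix x assume "x \<in> Some ` {w. T w}"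
  then obtain w where w: "T w" "x = Some w" by auto
  have q: "Q (cmod (d*w - b)) (cmod (a - c*w))" using QT w(1) by blast
  then have nz: "a - c*w \<noteq> 0" using inverse_denom_nonzero[OF ok] Q_le by blast
  let ?z = "(d*w - b)/(a - c*w)"
  have "Q (cmod ?z * cmod (a - c*w)) (cmod (a - c*w))" using q nz by (simp add: norm_divide)
  then have "P (cmod ?z)" using PQ[of "cmod ?z" "cmod (a - c*w)"] nz by simp
  then show "x \<in> mob_apply (a,b,c,d) ` (Some ` {z. P (cmod z)})"
    using mob_apply_inverse[OF ok nz] w(2) by (metis (mono_tags, lifting) image_eqI mem_Collect_eq)
qed

lemma unit_ball_Collect:
  "cball (0::complex) 1 = {z. cmod z \<le> 1}" "ball (0::complex) 1 = {z. cmod z < 1}"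
  "sphere (0::complex) 1 = {z. cmod z = 1}"
  by auto

lemma ball_Collect:
  fixes Z :: complex
  shows "cball Z R = {w. cmod (w - Z) \<le> R}" "ball Z R = {w. cmod (w - Z) < R}"
    "sphere Z R = {w. cmod (w - Z) = R}"
  by (auto simp: dist_norm norm_minus_commute)

lemma mob_image_cdisc:
  assumes "mob_ok m" "circ_s m > 0"
  shows "mob_apply m ` cdisc = Some ` cball (image_center m) (image_radius m)"
proof -
  obtain a b c d where m: "m = (a,b,c,d)" by (cases m) auto
  show ?thesis using assms unfolding m unit_ball_Collect unfolding ball_Collect
    by (intro mob_image_level_set[where Q = "\<lambda>x y. x \<le> y" and P = "\<lambda>x. x \<le> 1"])
       (auto simp: circ_equation_ball_iff(1) mult_le_cancel_right2)
qed

lemma mob_image_disc: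
  assumes "mob_ok m" "circ_s m > 0"
  shows "mob_apply m ` disc = Some ` ball (image_center m) (image_radius m)"
proof -
  obtain a b c d where m: "m = (a,b,c,d)" by (cases m) auto
  show ?thesis using assms unfolding m unit_ball_Collect unfolding ball_Collect
    by (intro mob_image_level_set[where Q = "\<lambda>x y. x < y" and P = "\<lambda>x. x < 1"])
       (auto simp: circ_equation_ball_iff(2) mult_less_cancel_right2)
qed

lemma mob_image_circle:
  assumes "mob_ok m" "circ_s m > 0"
  shows "mob_apply m ` (Some ` sphere 0 1) = Some ` sphere (image_center m) (image_radius m)"
proof -
  obtain a b c d where m: "m = (a,b,c,d)" by (cases m) auto
  show ?thesis using assms unfolding m unit_ball_Collect unfolding ball_Collect
    by (intro mob_image_level_set[where Q = "\<lambda>x y. x = y" and P = "\<lambda>x. x = 1"])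
       (auto simp: circ_equation_ball_iff(3))
qed

section \<open>The class \<open>\<M>(\<D>)\<close>\<close>

lemma quadratic_neg_outside_unit_disc:
  fixes s h :: real and e :: complex
  assumes "s \<le> 0" and "h * s - (cmod e)^2 < 0"
  shows "\<exists>w. cmod w \<ge> 1 \<and> s * (cmod w)^2 - 2 * Re (w * cnj e) + h < 0"
proof (cases "e = 0")
  case False
  then have e0: "cmod e > 0" by simp
  define t where "t = 1 + \<bar>h\<bar> / (2 * cmod e)"
  have t1: "t \<ge> 1" unfolding t_def using e0 by simp
  define w where "w = complex_of_real t * (e / complex_of_real (cmod e))"
  have nw: "cmod w = t" unfolding w_def using e0 t1 by (simp add: norm_mult norm_divide)
  have "w * cnj e = complex_of_real (t * cmod e)"
    unfolding w_def using e0
    by (simp add: complex_norm_square[symmetric] power2_eq_square field_simps)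
  then have re: "Re (w * cnj e) = t * cmod e" by simp
  have "s * (cmod w)^2 \<le> 0" using assms(1) by (simp add: mult_nonpos_nonneg)
  moreover have "2 * (t * cmod e) = 2 * cmod e + \<bar>h\<bar>" unfolding t_def using e0 by (simp add: field_simps)
  ultimately have "s * (cmod w)^2 - 2 * Re (w * cnj e) + h < 0" unfolding re using e0 by linarith
  then show ?thesis using nw t1 by blast
next
  case True
  then have s: "s < 0" using assms by (cases "s = 0") auto
  define t where "t = 1 + \<bar>h\<bar> / (- s)"
  have t1: "t \<ge> 1" unfolding t_def using s by (simp add: divide_nonneg_neg)
  have st: "s * t = s - \<bar>h\<bar>" unfolding t_def using s by (simp add: field_simps)
  have "s * t^2 \<le> s * t" using s t1 by (simp add: power2_eq_square mult_le_cancel_left)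
  then have "s * (cmod (complex_of_real t))^2 - 2 * Re (complex_of_real t * cnj e) + h < 0"
    using True st s t1 by simp
  then show ?thesis using t1 by (intro exI[of _ "complex_of_real t"]) simp
qed

lemma MD_circ_neg_in_disc:
  assumes m: "(a,b,c,d) \<in> MD" and neg: "(cmod (d*w - b))^2 < (cmod (a - c*w))^2"
  shows "cmod w < 1"
proof -
  have ok: "mob_ok (a,b,c,d)" using m by (simp add: MD_def)
  have lt: "cmod (d*w - b) < cmod (a - c*w)" using neg by (meson norm_ge_zero power_mono not_le)
  then have nz: "a - c*w \<noteq> 0" using inverse_denom_nonzero[OF ok] by simp
  let ?z = "(d*w - b)/(a - c*w)"
  have "Some ?z \<in> disc" using lt nz by (simp add: norm_divide)
  then have "mob_apply (a,b,c,d) (Some ?z) \<in> disc" using m unfolding MD_def by blast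
  then show ?thesis unfolding mob_apply_inverse[OF ok nz] by auto
qed

text \<open>If \<open>s \<le> 0\<close> the circle equation is negative at some \<open>|w| \<ge> 1\<close>, and such a \<open>w\<close> lies in
\<open>m(\<D>) \<subseteq> \<D>\<close>.\<close>

lemma MD_circ_s_pos:
  assumes m: "m \<in> MD"
  shows "circ_s m > 0"
proof (rule ccontr)
  obtain a b c d where M: "m = (a,b,c,d)" by (cases m) auto
  assume "\<not> circ_s m > 0"
  then have s: "circ_s m \<le> 0" by simp
  have "mob_det m \<noteq> 0" using m by (simp add: MD_def mob_ok_det)
  then have "circ_h m * circ_s m - (cmod (circ_e m))^2 < 0" using circ_coeff_identity[of m] by simp
  with s obtain w where w: "cmod w \<ge> 1"
    "circ_s m * (cmod w)^2 - 2 * Re (w * cnj (circ_e m)) + circ_h m < 0"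
    using quadratic_neg_outside_unit_disc by blast
  then have "(cmod (d*w - b))^2 < (cmod (a - c*w))^2" using circ_equation[of d w b a c] unfolding M by simp
  then show False using MD_circ_neg_in_disc[OF m[unfolded M]] w(1) by (meson not_le)
qed

lemma image_center_radius:
  assumes "circ_s m > 0"
  shows "cmod (image_center m) + image_radius m = (cmod (circ_e m) + cmod (mob_det m)) / circ_s m"
    "image_center m / complex_of_real (cmod (image_center m)) = circ_e m / complex_of_real (cmod (circ_e m))"
  using assms
  by (simp_all add: image_center_def image_radius_def norm_divide add_divide_distrib)

lemma MD_coeffs:
  assumes m: "m \<in> MD"
  shows "mob_ok m" "circ_s m > 0"
    "cmod (circ_e m) + cmod (mob_det m) \<le> circ_s m"
    "cmod (mob_det m) < circ_s m"
proof -
  show ok: "mob_ok m" using m by (simp add: MD_def)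
  show s: "circ_s m > 0" by (rule MD_circ_s_pos[OF m])
  let ?Z = "image_center m" and ?R = "image_radius m"
  have R0: "?R > 0" unfolding image_radius_def using s ok by (simp add: mob_ok_det)
  have im: "mob_apply m ` disc = Some ` ball ?Z ?R" by (rule mob_image_disc[OF ok s])
  then have "ball ?Z ?R \<subseteq> ball 0 1" using m by (simp add: MD_def inj_image_subset_iff)
  then have le: "cmod ?Z + ?R \<le> 1" using R0 ball_subset_ball_iff[of ?Z ?R 0 1] by (simp add: dist_norm)
  then show "cmod (circ_e m) + cmod (mob_det m) \<le> circ_s m"
    using s unfolding image_center_radius(1)[OF s] by (simp add: divide_simps)
  have "ball ?Z ?R \<noteq> ball 0 1" using m im by (auto simp: MD_def)
  then have "?R \<noteq> 1 \<or> ?Z \<noteq> 0" by auto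
  then have "?R < 1"
  proof
    assume "?R \<noteq> 1"
    then show ?thesis using le norm_ge_zero[of ?Z] by linarith
  next
    assume "?Z \<noteq> 0"
    then show ?thesis using le zero_less_norm_iff[of ?Z] by linarith
  qed
  then show "cmod (mob_det m) < circ_s m" unfolding image_radius_def using s by (simp add: divide_simps)
qed

lemma MD_maps_cdisc:
  assumes m: "m \<in> MD" and z: "cmod z \<le> 1"
  obtains y where "mob_apply m (Some z) = Some y" "cmod y \<le> 1"
proof -
  note P = MD_coeffs[OF m]
  have "mob_apply m (Some z) \<in> mob_apply m ` cdisc" using z by simp
  then have "mob_apply m (Some z) \<in> Some ` cball (image_center m) (image_radius m)"
    unfolding mob_image_cdisc[OF P(1,2)] .
  then obtain y where y: "mob_apply m (Some z) = Some y" "dist (image_center m) y \<le> image_radius m"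
    by auto
  have "cmod (image_center m) + image_radius m \<le> 1"
    unfolding image_center_radius(1)[OF P(2)] using P(2,3) by (simp add: divide_simps)
  moreover have "cmod y \<le> cmod (image_center m) + dist (image_center m) y"
    by (metis dist_0_norm dist_commute dist_triangle)
  ultimately have "cmod y \<le> 1" using y(2) by linarith
  then show ?thesis using that y(1) by blast
qed

declare circ_s.simps [simp del] circ_e.simps [simp del] circ_h.simps [simp del]

section \<open>Tangency and the points \<open>\<alpha>\<close>, \<open>\<beta>\<close>\<close>

lemma unit_circle_touch:
  fixes Z w :: complex
  assumes "cmod Z + R \<le> 1" "R < 1" "cmod w = 1" "cmod (w - Z) = R"
  shows "cmod Z + R = 1" "w = Z / complex_of_real (cmod Z)"
proof -
  have "cmod w \<le> cmod Z + cmod (w - Z)" by (rule norm_triangle_sub)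
  then show eq: "cmod Z + R = 1" using assms by simp
  then have Z0: "Z \<noteq> 0" using assms(2) by auto
  have "cmod (Z + (w - Z)) = cmod Z + cmod (w - Z)" using eq assms by simp
  then have "cmod Z *\<^sub>R (w - Z) = cmod (w - Z) *\<^sub>R Z" using norm_triangle_eq by blast
  then have "complex_of_real (cmod Z) * w = complex_of_real (cmod Z + R) * Z"
    using assms(4) by (simp add: scaleR_conv_of_real algebra_simps)
  then have "complex_of_real (cmod Z) * w = Z" using eq by simp
  then show "w = Z / complex_of_real (cmod Z)" using Z0 by (simp add: field_simps)
qed

lemma unit_circle_touch_point:
  fixes Z :: complex
  assumes "cmod Z + R = 1" "Z \<noteq> 0" "R \<ge> 0"
  shows "cmod (Z / complex_of_real (cmod Z)) = 1" "cmod (Z / complex_of_real (cmod Z) - Z) = R"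
proof -
  show "cmod (Z / complex_of_real (cmod Z)) = 1" using assms by (simp add: norm_divide)
  have "Z / complex_of_real (cmod Z) - Z = complex_of_real (1 - cmod Z) * (Z / complex_of_real (cmod Z))"
    using assms(2) by (simp add: field_simps)
  moreover have "cmod (complex_of_real (1 - cmod Z)) = R" using assms by (simp only: norm_of_real)
  ultimately show "cmod (Z / complex_of_real (cmod Z) - Z) = R" using assms
    by (simp only: norm_mult norm_divide) simp
qed

definition touch_point :: "mob \<Rightarrow> complex" where
  "touch_point m = circ_e m / complex_of_real (cmod (circ_e m))"

fun touch_preimage :: "mob \<Rightarrow> complex" where
  "touch_preimage (a,b,c,d) = (d * touch_point (a,b,c,d) - b) / (a - c * touch_point (a,b,c,d))"

lemma MD_unit_circle_touch:
  assumes m: "m \<in> MD" and z: "cmod z = 1" and fz: "mob_apply m (Some z) \<in> Some ` sphere 0 1"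
  shows "cmod (circ_e m) + cmod (mob_det m) = circ_s m"
    "mob_apply m (Some z) = Some (touch_point m)" "z = touch_preimage m"
proof -
  note P = MD_coeffs[OF m]
  obtain w where w: "mob_apply m (Some z) = Some w" "cmod w = 1" using fz by auto
  have "Some w \<in> mob_apply m ` (Some ` sphere 0 1)" using w(1) z by (metis image_eqI mem_sphere_0)
  then have wZ: "cmod (w - image_center m) = image_radius m"
    unfolding mob_image_circle[OF P(1,2)] by (auto simp: dist_norm norm_minus_commute)
  have le: "cmod (image_center m) + image_radius m \<le> 1"
    unfolding image_center_radius(1)[OF P(2)] using P(2,3) by (simp add: divide_simps)
  have "image_radius m < 1" unfolding image_radius_def using P(2,4) by (simp add: divide_simps)
  note touch = unit_circle_touch[OF le this w(2) wZ]
  show "cmod (circ_e m) + cmod (mob_det m) = circ_s m"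
    using touch(1) P(2) unfolding image_center_radius(1)[OF P(2)] by (simp add: divide_simps)
  have wb: "w = touch_point m"
    using touch(2) image_center_radius(2)[OF P(2)] unfolding touch_point_def by simp
  then show "mob_apply m (Some z) = Some (touch_point m)" using w(1) by simp
  obtain a b c d where M: "m = (a,b,c,d)" by (cases m) auto
  have "c*z + d \<noteq> 0" using no_pole_in_cdisc P(2) z unfolding M by simp
  then show "z = touch_preimage m"
    using mob_apply_inverse_eq[of a b c d z w] P(1) w(1) wb unfolding M by simp
qed

lemma MD_tangent_iff:
  assumes m: "m \<in> MD"
  shows "tangent m \<longleftrightarrow> cmod (circ_e m) + cmod (mob_det m) = circ_s m"
proof
  assume "tangent m"
  then show "cmod (circ_e m) + cmod (mob_det m) = circ_s m"
    unfolding tangent_def using MD_unit_circle_touch(1)[OF m] by blast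
next
  assume eq: "cmod (circ_e m) + cmod (mob_det m) = circ_s m"
  note P = MD_coeffs[OF m]
  let ?w = "image_center m / complex_of_real (cmod (image_center m))"
  have e1: "cmod (image_center m) + image_radius m = 1"
    unfolding image_center_radius(1)[OF P(2)] eq using P(2) by simp
  have "image_radius m < 1" unfolding image_radius_def using P(2,4) by (simp add: divide_simps)
  then have "image_center m \<noteq> 0" using e1 by auto
  moreover have "image_radius m \<ge> 0" unfolding image_radius_def using P(2) by simp
  ultimately have "cmod (?w) = 1 \<and> cmod (?w - image_center m) = image_radius m"
    using unit_circle_touch_point[OF e1] by blast
  note touch = conjunct1[OF this] conjunct2[OF this]
  have "Some ?w \<in> mob_apply m ` (Some ` sphere 0 1)"
    unfolding mob_image_circle[OF P(1,2)] using touch(2) by (simp add: dist_norm norm_minus_commute)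
  then obtain z where "cmod z = 1" "mob_apply m (Some z) = Some ?w" by auto
  then show "tangent m" unfolding tangent_def using touch(1) by auto
qed

lemma MD_tangent_points:
  assumes m: "m \<in> MD" and t: "tangent m"
  shows "alpha m = touch_preimage m" "cmod (alpha m) = 1"
    "mob_apply m (Some (alpha m)) = Some (touch_point m)"
    "beta m = Some (touch_point m)" "cmod (touch_point m) = 1"
proof -
  obtain z where z: "cmod z = 1" "mob_apply m (Some z) \<in> Some ` sphere 0 1"
    using t unfolding tangent_def by blast
  have "(THE y. cmod y = 1 \<and> mob_apply m (Some y) \<in> Some ` sphere 0 1) = touch_preimage m"
    using z MD_unit_circle_touch(3)[OF m] by (intro the_equality) (metis, blast)
  then show al: "alpha m = touch_preimage m" unfolding alpha_def using t by simp
  have za: "z = touch_preimage m" using MD_unit_circle_touch(3)[OF m z] .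
  then show "cmod (alpha m) = 1" using z(1) al by simp
  show fa: "mob_apply m (Some (alpha m)) = Some (touch_point m)"
    using MD_unit_circle_touch(2)[OF m z] za al by simp
  then show "beta m = Some (touch_point m)" unfolding beta_def using t by simp
  show "cmod (touch_point m) = 1" using z(2) fa za al by auto
qed

lemma alpha_beta_not_tangent:
  assumes "\<not> tangent m"
  shows "alpha m = 0" "beta m = None"
  using assms by (simp_all add: alpha_def beta_def)

lemma MD_alpha_in_cdisc: "m \<in> MD \<Longrightarrow> cmod (alpha m) \<le> 1"
  using MD_tangent_points(2)[of m] alpha_beta_not_tangent(1)[of m] by (cases "tangent m") simp_all

lemma gamma_eq:
  "gamma (a,b,c,d) = (cmod (c * alpha (a,b,c,d) + d))^2 / cmod (a*d - b*c)"
  unfolding gamma_def by (simp add: norm_divide norm_power)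

lemma MD_gamma_pos:
  assumes m: "m \<in> MD"
  shows "gamma m > 0"
proof -
  obtain a b c d where M: "m = (a,b,c,d)" by (cases m) auto
  note P = MD_coeffs[OF m]
  have "c * alpha m + d \<noteq> 0"
    using no_pole_in_cdisc MD_alpha_in_cdisc[OF m] P(2) unfolding M by simp
  then show ?thesis using P(1) unfolding gamma_def M by (simp add: mob_ok_def)
qed

section \<open>The gain form\<close>

text \<open>Since \<open>1 / radius = herm_norm (bottom row) / |det|\<close> for the image of the unit disc,
\<open>gain_form f\<^sub>n\<^sub>+\<^sub>1\<close> at the bottom row of \<open>P\<^sub>n\<close>, divided by \<open>|det P\<^sub>n\<^sub>+\<^sub>1|\<close>, is the
increment of the inverse radius.\<close>

fun herm_norm :: "complex \<times> complex \<Rightarrow> real" where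
  "herm_norm (p,q) = (cmod q)^2 - (cmod p)^2"

fun row_mult :: "complex \<times> complex \<Rightarrow> mob \<Rightarrow> complex \<times> complex" where
  "row_mult (p,q) (a,b,c,d) = (p*a + q*c, p*b + q*d)"

definition gain_form :: "mob \<Rightarrow> complex \<times> complex \<Rightarrow> real" where
  "gain_form m w = herm_norm (row_mult w m) - cmod (mob_det m) * herm_norm w"

lemma gain_form_expand:
  "gain_form m (p,q) = (circ_h m + cmod (mob_det m)) * (cmod p)^2 + 2 * Re (circ_e m * p * cnj q)
     + (circ_s m - cmod (mob_det m)) * (cmod q)^2"
proof -
  obtain a b c d where M: "m = (a,b,c,d)" by (cases m) auto
  have "complex_of_real (herm_norm (p*a + q*c, p*b + q*d))
     = complex_of_real (circ_h (a,b,c,d) * (cmod p)^2 + 2 * Re (circ_e (a,b,c,d) * p * cnj q)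
         + circ_s (a,b,c,d) * (cmod q)^2)"
    unfolding herm_norm.simps circ_h.simps circ_s.simps circ_e.simps of_real_diff of_real_add
      complex_add_cnj[symmetric]
    unfolding of_real_mult of_real_diff complex_norm_square
    by (simp add: algebra_simps)
  then have "herm_norm (p*a + q*c, p*b + q*d) = circ_h (a,b,c,d) * (cmod p)^2
      + 2 * Re (circ_e (a,b,c,d) * p * cnj q) + circ_s (a,b,c,d) * (cmod q)^2"
    using of_real_eq_iff by blast
  then show ?thesis unfolding gain_form_def M by (simp add: algebra_simps)
qed

lemma herm_quadratic_nonneg:
  fixes A B :: real and x p q :: complex
  assumes "A \<ge> 0" "B \<ge> 0" "A * B \<ge> (cmod x)^2"
  shows "A * (cmod p)^2 + 2 * Re (x * p * cnj q) + B * (cmod q)^2 \<ge> 0"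
proof -
  have re: "Re (x * p * cnj q) \<ge> - (cmod x * cmod p * cmod q)"
    using abs_Re_le_cmod[of "x * p * cnj q"] by (simp add: norm_mult)
  have "A * (cmod p)^2 - 2 * (cmod x * cmod p * cmod q) + B * (cmod q)^2 \<ge> 0"
  proof (cases "A = 0")
    case True
    then show ?thesis using assms by simp
  next
    case False
    have "A * (A * (cmod p)^2 - 2 * (cmod x * cmod p * cmod q) + B * (cmod q)^2)
       = (A * cmod p - cmod x * cmod q)^2 + (A*B - (cmod x)^2) * (cmod q)^2"
      by (simp add: power2_eq_square algebra_simps)
    also have "\<dots> \<ge> 0" using assms(3) by simp
    finally show ?thesis using False assms(1) by (simp add: zero_le_mult_iff)
  qed
  then show ?thesis using re by linarith
qed

lemma herm_quadratic_coercive: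
  fixes A B :: real and x :: complex
  assumes A: "A \<ge> 0" and B: "B > 0" and det: "A * B - (cmod x)^2 > 0"
  shows "\<exists>\<epsilon>>0. \<forall>p q. A * (cmod p)^2 + 2 * Re (x * p * cnj q) + B * (cmod q)^2
                    \<ge> \<epsilon> * ((cmod p)^2 + (cmod q)^2)"
proof -
  define X where "X = A * B - (cmod x)^2"
  define \<epsilon> where "\<epsilon> = X / (A + B)"
  have AB: "A + B > 0" using A B by simp
  have e0: "\<epsilon> > 0" unfolding \<epsilon>_def using det AB X_def by simp
  have "X \<le> A * B" unfolding X_def by simp
  also have "\<dots> \<le> A * (A + B)" using A B by (simp add: mult_left_mono)
  finally have eA: "\<epsilon> \<le> A" unfolding \<epsilon>_def using AB by (simp add: divide_simps mult.commute)
  have "X \<le> A * B" unfolding X_def by simp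
  also have "\<dots> \<le> B * (A + B)" using A B by (simp add: algebra_simps)
  finally have eB: "\<epsilon> \<le> B" unfolding \<epsilon>_def using AB by (simp add: divide_simps mult.commute)
  have "(A - \<epsilon>) * (B - \<epsilon>) = A * B - \<epsilon> * (A + B) + \<epsilon>^2"
    by (simp add: power2_eq_square algebra_simps)
  also have "\<epsilon> * (A + B) = X" unfolding \<epsilon>_def using AB by simp
  finally have "(A - \<epsilon>) * (B - \<epsilon>) \<ge> (cmod x)^2" unfolding X_def by simp
  with eA eB have "(A - \<epsilon>) * (cmod p)^2 + 2 * Re (x * p * cnj q) + (B - \<epsilon>) * (cmod q)^2 \<ge> 0" for p q
    using herm_quadratic_nonneg[of "A - \<epsilon>" "B - \<epsilon>" x p q] by simp
  then show ?thesis using e0 by (intro exI[of _ \<epsilon>]) (simp add: algebra_simps)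
qed

lemma MD_gain_coeffs:
  assumes m: "m \<in> MD"
  defines "H1 \<equiv> circ_h m + cmod (mob_det m)" and "H2 \<equiv> circ_s m - cmod (mob_det m)"
    and "E \<equiv> cmod (circ_e m)"
  shows "H1 \<ge> 0" "H2 > 0" "H1 * H2 - E^2 \<ge> 0"
    and "\<not> tangent m \<Longrightarrow> H1 * H2 - E^2 > 0"
    and "tangent m \<Longrightarrow> H1 = E \<and> H2 = E \<and> E > 0"
proof -
  note P = MD_coeffs[OF m]
  define s where "s = circ_s m"
  define D where "D = cmod (mob_det m)"
  have s0: "s > 0" and D0: "D > 0" and ED: "E + D \<le> s" and Ds: "D < s"
    using P unfolding s_def D_def E_def by (simp_all add: mob_ok_det)
  have sH1: "s * H1 = E^2 - D^2 + D * s"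
    using circ_coeff_identity[of m] unfolding H1_def s_def D_def E_def by (simp add: algebra_simps)
  have H2: "H2 = s - D" unfolding H2_def s_def D_def ..
  have detid: "s * (H1 * H2 - E^2) = D * ((s - D)^2 - E^2)"
  proof -
    have "s * (H1 * H2 - E^2) = (s * H1) * H2 - s * E^2" by (simp add: algebra_simps)
    also have "\<dots> = (E^2 - D^2 + D * s) * (s - D) - s * E^2" unfolding sH1 H2 ..
    also have "\<dots> = D * ((s - D)^2 - E^2)" by (simp add: power2_eq_square algebra_simps)
    finally show ?thesis .
  qed
  have "D * (E + D) \<le> D * s" using ED D0 by (intro mult_left_mono) auto
  moreover have "E * (E + D) = E^2 - D^2 + D * (E + D)" by (simp add: power2_eq_square algebra_simps)
  ultimately have "s * H1 \<ge> E * (E + D)" unfolding sH1 by linarith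
  moreover have "E * (E + D) \<ge> 0" using D0 by (simp add: E_def)
  ultimately have "s * H1 \<ge> 0" by linarith
  then show "H1 \<ge> 0" using s0 by (simp add: zero_le_mult_iff)
  show "H2 > 0" unfolding H2_def using Ds s_def D_def by simp
  have "(s - D)^2 \<ge> E^2" using ED by (simp add: E_def power_mono)
  then have "s * (H1 * H2 - E^2) \<ge> 0" unfolding detid using D0 by simp
  then show "H1 * H2 - E^2 \<ge> 0" using s0 by (simp add: zero_le_mult_iff)
  have tiff: "tangent m \<longleftrightarrow> E + D = s" using MD_tangent_iff[OF m] unfolding E_def D_def s_def .
  show "H1 * H2 - E^2 > 0" if "\<not> tangent m"
  proof -
    have "(s - D)^2 > E^2" using that tiff ED by (simp add: E_def power_strict_mono)
    then have "s * (H1 * H2 - E^2) > 0" unfolding detid using D0 by simp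
    then show ?thesis using s0 by (simp add: zero_less_mult_iff)
  qed
  show "H1 = E \<and> H2 = E \<and> E > 0" if "tangent m"
  proof -
    have eq: "E + D = s" using that tiff by simp
    have "s * H1 = s * E" unfolding sH1 using eq[symmetric] by (simp add: power2_eq_square algebra_simps)
    then show ?thesis using eq s0 Ds unfolding H2_def s_def D_def by simp
  qed
qed

lemma MD_gain_form_nonneg:
  assumes "m \<in> MD"
  shows "gain_form m w \<ge> 0"
proof (cases w)
  case (Pair p q)
  show ?thesis unfolding Pair gain_form_expand using MD_gain_coeffs[OF assms]
    by (intro herm_quadratic_nonneg) simp_all
qed

lemma MD_gain_form_coercive:
  assumes "m \<in> MD" "\<not> tangent m"
  shows "\<exists>\<epsilon>>0. \<forall>w. gain_form m w \<ge> \<epsilon> * herm_norm w"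
proof -
  note C = MD_gain_coeffs[OF assms(1)]
  obtain \<epsilon> where e: "\<epsilon> > 0" and bound:
    "\<And>p q. gain_form m (p,q) \<ge> \<epsilon> * ((cmod p)^2 + (cmod q)^2)"
    using herm_quadratic_coercive[OF C(1,2) C(4)[OF assms(2)]] unfolding gain_form_expand by blast
  have "gain_form m (p,q) \<ge> \<epsilon> * herm_norm (p,q)" for p q
  proof -
    have "\<epsilon> * herm_norm (p,q) \<le> \<epsilon> * ((cmod p)^2 + (cmod q)^2)" using e by (intro mult_left_mono) auto
    then show ?thesis using bound[of p q] by linarith
  qed
  then show ?thesis using e by auto
qed

lemma MD_gain_form_tangent:
  assumes "m \<in> MD" "tangent m"
  shows "gain_form m (p,q) = cmod (circ_e m) * (cmod (p * touch_point m + q))^2"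
proof -
  define E where "E = cmod (circ_e m)"
  have E: "E > 0" and coeffs: "circ_h m + cmod (mob_det m) = E" "circ_s m - cmod (mob_det m) = E"
    using MD_gain_coeffs(5)[OF assms] unfolding E_def by auto
  have ee: "circ_e m * cnj (circ_e m) = complex_of_real E * complex_of_real E"
    unfolding E_def complex_norm_square[symmetric] by (simp add: power2_eq_square)
  have "complex_of_real (E * (cmod p)^2 + 2 * Re (circ_e m * p * cnj q) + E * (cmod q)^2)
      = complex_of_real (E * (cmod (p * touch_point m + q))^2)"
    unfolding of_real_add complex_add_cnj[symmetric]
    unfolding of_real_mult complex_norm_square touch_point_def E_def[symmetric]
    using E ee by (simp add: field_simps)
  then have "E * (cmod p)^2 + 2 * Re (circ_e m * p * cnj q) + E * (cmod q)^2
      = E * (cmod (p * touch_point m + q))^2"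
    using of_real_eq_iff by blast
  then show ?thesis unfolding gain_form_expand coeffs E_def[symmetric] .
qed

definition tangent_ratio :: "mob \<Rightarrow> real" where
  "tangent_ratio m = cmod (circ_e m) / cmod (mob_det m)"

lemma MD_tangent_ratio_pos:
  assumes "m \<in> MD" "tangent m"
  shows "tangent_ratio m > 0"
proof -
  have "cmod (circ_e m) > 0" using MD_gain_coeffs(5)[OF assms] by simp
  then show ?thesis using MD_coeffs(1)[OF assms(1)] unfolding tangent_ratio_def by (simp add: mob_ok_det)
qed

lemma nested_cballs_dist:
  fixes Z :: "nat \<Rightarrow> 'a::metric_space" and \<rho> :: "nat \<Rightarrow> real"
  assumes step: "\<And>n. dist (Z (Suc n)) (Z n) + \<rho> (Suc n) \<le> \<rho> n" and "n \<le> m"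
  shows "dist (Z m) (Z n) \<le> \<rho> n - \<rho> m"
  using assms(2)
proof (induction m rule: dec_induct)
  case (step k)
  then show ?case using dist_triangle[of "Z (Suc k)" "Z n" "Z k"] assms(1)[of k] by linarith
qed simp

lemma nested_cballs_limit:
  fixes Z :: "nat \<Rightarrow> 'a::complete_space" and \<rho> :: "nat \<Rightarrow> real"
  assumes step: "\<And>n. dist (Z (Suc n)) (Z n) + \<rho> (Suc n) \<le> \<rho> n" and lb: "\<And>n. \<rho> n \<ge> r0"
  obtains c r where "Z \<longlonglongrightarrow> c" "\<rho> \<longlonglongrightarrow> r" "r \<ge> r0" "\<And>n. dist c (Z n) \<le> \<rho> n - r"
proof -
  note dd = nested_cballs_dist[of Z \<rho>, OF step]
  have "\<rho> (Suc n) \<le> \<rho> n" for n using step[of n] zero_le_dist[of "Z (Suc n)" "Z n"] by linarith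
  then have dec: "decseq \<rho>" by (simp add: decseq_Suc_iff)
  obtain r where rl: "\<rho> \<longlonglongrightarrow> r" and rle: "\<And>i. r \<le> \<rho> i"
    using decseq_convergent[OF dec, of r0] lb by blast
  have "Cauchy Z"
  proof (rule metric_CauchyI)
    fix e :: real assume "e > 0"
    then obtain N where "\<forall>n\<ge>N. dist (\<rho> n) r < e" using rl unfolding lim_sequentially by blast
    then have "dist (\<rho> N) r < e" by simp
    then have N: "\<rho> N - r < e" using rle[of N] by (simp add: dist_real_def)
    have "dist (Z m) (Z n) < e" if "m \<ge> N" "n \<ge> N" "n \<le> m" for m n
    proof -
      have "dist (Z m) (Z n) \<le> \<rho> n - \<rho> m" using dd[OF that(3)] .
      also have "\<dots> \<le> \<rho> N - r" using decseqD[OF dec that(2)] rle[of m] by simp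
      finally show ?thesis using N by simp
    qed
    then have "dist (Z m) (Z n) < e" if "m \<ge> N" "n \<ge> N" for m n
      using that by (metis dist_commute nle_le)
    then show "\<exists>M. \<forall>m\<ge>M. \<forall>n\<ge>M. dist (Z m) (Z n) < e" by blast
  qed
  then obtain c where cl: "Z \<longlonglongrightarrow> c" using Cauchy_convergent_iff convergent_def by blast
  have "dist c (Z n) \<le> \<rho> n - r" for n
  proof -
    have l1: "(\<lambda>m. dist (Z m) (Z n)) \<longlonglongrightarrow> dist c (Z n)" using cl by (intro tendsto_intros)
    have l2: "(\<lambda>m. \<rho> n - \<rho> m) \<longlonglongrightarrow> \<rho> n - r" using rl by (intro tendsto_intros)
    show ?thesis using LIMSEQ_le[OF l1 l2] dd by blast
  qed
  moreover have "r \<ge> r0" using LIMSEQ_le_const[OF rl] lb by blast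
  ultimately show ?thesis using that cl rl by blast
qed

lemma nested_cballs_Inter:
  fixes Z :: "nat \<Rightarrow> 'a::euclidean_space" and \<rho> :: "nat \<Rightarrow> real"
  assumes sub: "\<And>n. cball (Z (Suc n)) (\<rho> (Suc n)) \<subseteq> cball (Z n) (\<rho> n)"
    and lb: "\<And>n. \<rho> n \<ge> r0" and r0: "r0 > 0"
  shows "\<exists>c r. r > 0 \<and> (\<Inter>n\<in>{1..}. cball (Z n) (\<rho> n)) = cball c r"
proof -
  have "dist (Z (Suc n)) (Z n) + \<rho> (Suc n) \<le> \<rho> n" for n
    using sub[of n] cball_subset_cball_iff lb[of "Suc n"] r0 by fastforce
  then obtain c r where cl: "Z \<longlonglongrightarrow> c" and rl: "\<rho> \<longlonglongrightarrow> r" and "r \<ge> r0"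
    and dc: "\<And>n. dist c (Z n) \<le> \<rho> n - r"
    using nested_cballs_limit[of Z \<rho> r0] lb by metis
  have "(\<Inter>n\<in>{1..}. cball (Z n) (\<rho> n)) = cball c r"
  proof (intro equalityI subsetI)
    fix x assume x: "x \<in> (\<Inter>n\<in>{1..}. cball (Z n) (\<rho> n))"
    have "(\<lambda>n. dist (Z n) x) \<longlonglongrightarrow> dist c x" using cl by (intro tendsto_intros)
    moreover have "\<forall>n\<ge>1. dist (Z n) x \<le> \<rho> n" using x by auto
    ultimately have "dist c x \<le> r" using LIMSEQ_le[OF _ rl] by blast
    then show "x \<in> cball c r" by simp
  next
    fix x assume "x \<in> cball c r"
    then have "dist (Z n) x \<le> \<rho> n" for n
      using dist_triangle[of "Z n" x c] dc[of n] by (simp add: dist_commute)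
    then show "x \<in> (\<Inter>n\<in>{1..}. cball (Z n) (\<rho> n))" by simp
  qed
  then show ?thesis using \<open>r \<ge> r0\<close> r0 by (intro exI[of _ c] exI[of _ r]) simp
qed

lemma finite_uniform_pos:
  fixes P :: "'a \<Rightarrow> real \<Rightarrow> bool"
  assumes "finite S" and mono: "\<And>x \<epsilon> \<epsilon>'. P x \<epsilon> \<Longrightarrow> 0 < \<epsilon>' \<Longrightarrow> \<epsilon>' \<le> \<epsilon> \<Longrightarrow> P x \<epsilon>'"
    and "\<forall>x\<in>S. \<exists>\<epsilon>>0. P x \<epsilon>"
  shows "\<exists>\<epsilon>>0. \<forall>x\<in>S. P x \<epsilon>"
  using assms(1,3)
proof (induction S rule: finite_induct)
  case empty then show ?case using zero_less_one by blast
next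
  case (insert x S)
  obtain e1 where e1: "e1 > 0" "P x e1" using insert.prems by auto
  obtain e2 where e2: "e2 > 0" "\<forall>y\<in>S. P y e2" using insert.IH insert.prems by auto
  have "\<forall>y\<in>insert x S. P y (min e1 e2)" using e1 e2 mono by (auto simp: min_def)
  then show ?case using e1 e2 by (intro exI[of _ "min e1 e2"]) simp
qed

lemma bounded_iff_summable_weighted:
  fixes g k T :: "nat \<Rightarrow> real"
  assumes "mono g" and incr: "\<And>j. g (K + j) = g K + (\<Sum>i<j. k i * T i)"
    and T: "\<And>i. T i > 0" and k: "\<And>i. kmin \<le> k i" "\<And>i. k i \<le> kmax" and "kmin > 0"
  shows "(\<exists>B. \<forall>n. g n \<le> B) \<longleftrightarrow> summable T"
proof
  have T0: "T i \<ge> 0" for i using T[of i] by simp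
  assume "\<exists>B. \<forall>n. g n \<le> B"
  then obtain B where B: "\<And>n. g n \<le> B" by blast
  show "summable T"
  proof (rule summableI_nonneg_bounded)
    show "0 \<le> T n" for n by (rule T0)
    show "(\<Sum>i<j. T i) \<le> (B - g K) / kmin" for j
    proof -
      have "kmin * (\<Sum>i<j. T i) \<le> (\<Sum>i<j. k i * T i)"
        unfolding sum_distrib_left by (intro sum_mono mult_right_mono) (use k T0 in auto)
      also have "\<dots> \<le> B - g K" using incr[of j] B[of "K + j"] by simp
      finally show ?thesis using \<open>kmin > 0\<close> by (simp add: field_simps)
    qed
  qed
next
  have T0: "T i \<ge> 0" for i using T[of i] by simp
  assume sm: "summable T"
  have partial: "(\<Sum>i<j. T i) \<le> suminf T" for j
    by (rule sum_le_suminf[OF sm]) (use T0 in auto)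
  have kmax: "kmax > 0" using k[of 0] \<open>kmin > 0\<close> by linarith
  have "g n \<le> g K + kmax * suminf T" for n
  proof (cases "n \<ge> K")
    case True
    then obtain j where n: "n = K + j" using le_Suc_ex by blast
    have "(\<Sum>i<j. k i * T i) \<le> kmax * (\<Sum>i<j. T i)"
      unfolding sum_distrib_left by (intro sum_mono mult_right_mono) (use k T0 in auto)
    also have "\<dots> \<le> kmax * suminf T" using partial[of j] kmax by simp
    finally show ?thesis using incr[of j] n by simp
  next
    case False
    then have "g n \<le> g K" using \<open>mono g\<close> by (simp add: monoD)
    moreover have "kmax * suminf T \<ge> 0" using kmax partial[of 0] by simp
    ultimately show ?thesis by linarith
  qed
  then show "\<exists>B. \<forall>n. g n \<le> B" by blast
qed

section \<open>Two consecutive maps\<close>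

lemma MD_det_pos: "m \<in> MD \<Longrightarrow> cmod (mob_det m) > 0"
  by (simp add: MD_def mob_ok_det)

lemma herm_norm_row_mult: "herm_norm (row_mult w m) = gain_form m w + cmod (mob_det m) * herm_norm w"
  unfolding gain_form_def by simp

lemma herm_norm_le_two_lines:
  fixes \<beta> y p q :: complex
  assumes "\<beta> \<noteq> y" "cmod \<beta> = 1"
  shows "herm_norm (p,q) \<le> (2 + 2 / (cmod (\<beta> - y))^2) * ((cmod (p*\<beta> + q))^2 + (cmod (p*y + q))^2)"
proof -
  define L1 where "L1 = cmod (p*\<beta> + q)"
  define L2 where "L2 = cmod (p*y + q)"
  define k where "k = cmod (\<beta> - y)"
  have k0: "k > 0" unfolding k_def using assms by simp
  have sq2: "(x + z)^2 \<le> 2 * (x^2 + z^2)" for x z :: real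
    using zero_le_power2[of "x - z"] by (simp add: power2_eq_square algebra_simps)
  have "p * (\<beta> - y) = (p*\<beta> + q) - (p*y + q)" by (simp add: algebra_simps)
  then have "cmod p * k \<le> L1 + L2" unfolding k_def L1_def L2_def
    by (metis norm_mult norm_triangle_ineq4)
  then have "(cmod p * k)^2 \<le> (L1 + L2)^2" by (rule power_mono) (use k0 in simp)
  also have "\<dots> \<le> 2 * (L1^2 + L2^2)" by (rule sq2)
  finally have "(cmod p)^2 \<le> 2 * (L1^2 + L2^2) / k^2"
    using k0 by (simp add: field_simps power_mult_distrib)
  moreover have "cmod q \<le> L1 + cmod p"
    using norm_triangle_ineq4[of "p*\<beta> + q" "p*\<beta>"] assms(2) unfolding L1_def by (simp add: norm_mult)
  then have "(cmod q)^2 \<le> 2 * (L1^2 + (cmod p)^2)"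
    using sq2[of L1 "cmod p"] power_mono[of "cmod q" "L1 + cmod p" 2] by simp
  ultimately have "herm_norm (p,q) \<le> 2 * L1^2 + 2 * (L1^2 + L2^2) / k^2" by simp
  also have "\<dots> \<le> (2 + 2 / k^2) * (L1^2 + L2^2)" by (simp add: algebra_simps add_divide_distrib)
  finally show ?thesis unfolding L1_def L2_def k_def .
qed

definition two_step_gain :: "mob \<Rightarrow> mob \<Rightarrow> complex \<times> complex \<Rightarrow> real" where
  "two_step_gain m1 m2 w = gain_form m1 w / cmod (mob_det m1)
     + gain_form m2 (row_mult w m1) / (cmod (mob_det m1) * cmod (mob_det m2))"

lemma two_step_gain_tangent:
  assumes m1: "m1 \<in> MD" and m2: "m2 \<in> MD" and t1: "tangent m1" and t2: "tangent m2"
    and fy: "mob_apply m1 (Some (touch_point m2)) = Some y"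
  shows "\<exists>\<rho>>0. \<forall>p q. two_step_gain m1 m2 (p,q)
           = tangent_ratio m1 * (cmod (p * touch_point m1 + q))^2 + \<rho> * (cmod (p*y + q))^2"
proof -
  obtain a b c d where M1: "m1 = (a,b,c,d)" by (cases m1) auto
  define \<beta> where "\<beta> = touch_point m2"
  have np: "c*\<beta> + d \<noteq> 0" and y: "y = (a*\<beta> + b)/(c*\<beta> + d)"
    using fy unfolding M1 \<beta>_def[symmetric] by (auto split: if_splits)
  define \<rho> where "\<rho> = cmod (circ_e m2) * (cmod (c*\<beta> + d))^2 / (cmod (mob_det m1) * cmod (mob_det m2))"
  have "\<rho> > 0" unfolding \<rho>_def
    using MD_gain_coeffs(5)[OF m2 t2] MD_det_pos[OF m1] MD_det_pos[OF m2] np by simp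
  moreover have "two_step_gain m1 m2 (p,q)
      = tangent_ratio m1 * (cmod (p * touch_point m1 + q))^2 + \<rho> * (cmod (p*y + q))^2" for p q
  proof -
    have "row_mult (p,q) m1 = (p*a + q*c, p*b + q*d)" unfolding M1 by simp
    moreover have "(p*a + q*c)*\<beta> + (p*b + q*d) = (c*\<beta> + d) * (p*y + q)"
      unfolding y using np by (simp add: field_simps)
    ultimately show ?thesis
      unfolding two_step_gain_def \<rho>_def tangent_ratio_def \<beta>_def[symmetric]
      by (simp add: MD_gain_form_tangent[OF m1 t1] MD_gain_form_tangent[OF m2 t2, folded \<beta>_def]
          norm_mult power_mult_distrib)
  qed
  ultimately show ?thesis by blast
qed

text \<open>With both maps tangent the gain vanishes only on the two lines \<open>p\<beta>\<^sub>1 + q = 0\<close> and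
\<open>py + q = 0\<close> with \<open>y = m\<^sub>1(\<beta>\<^sub>2)\<close>, and the mismatch \<open>\<alpha>\<^sub>1 \<noteq> \<beta>\<^sub>2\<close> means exactly \<open>y \<noteq> \<beta>\<^sub>1\<close>.\<close>

lemma two_step_gain_coercive_tangent:
  assumes m1: "m1 \<in> MD" and m2: "m2 \<in> MD" and t1: "tangent m1" and t2: "tangent m2"
    and mismatch: "Some (alpha m1) \<noteq> beta m2"
  shows "\<exists>\<epsilon>>0. \<forall>w. two_step_gain m1 m2 w \<ge> \<epsilon> * herm_norm w"
proof -
  define \<beta>1 where "\<beta>1 = touch_point m1"
  define \<beta>2 where "\<beta>2 = touch_point m2"
  have \<beta>1: "cmod \<beta>1 = 1" and \<beta>2: "cmod \<beta>2 = 1"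
    using MD_tangent_points(5) m1 m2 t1 t2 unfolding \<beta>1_def \<beta>2_def by auto
  obtain y where fy: "mob_apply m1 (Some \<beta>2) = Some y"
    using MD_maps_cdisc[OF m1, of \<beta>2] \<beta>2 by auto
  have "y \<noteq> \<beta>1"
  proof
    assume "y = \<beta>1"
    then have "\<beta>2 = alpha m1"
      using mob_apply_inj[OF MD_coeffs(1)[OF m1] fy] MD_tangent_points(3)[OF m1 t1] \<beta>1_def by simp
    then show False using mismatch MD_tangent_points(4)[OF m2 t2] unfolding \<beta>2_def by simp
  qed
  obtain \<rho> where \<rho>: "\<rho> > 0" and gain: "\<And>p q. two_step_gain m1 m2 (p,q)
      = tangent_ratio m1 * (cmod (p*\<beta>1 + q))^2 + \<rho> * (cmod (p*y + q))^2"
    using two_step_gain_tangent[OF m1 m2 t1 t2 fy[unfolded \<beta>2_def]] unfolding \<beta>1_def by auto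
  define \<kappa> where "\<kappa> = min (tangent_ratio m1) \<rho>"
  have \<kappa>: "\<kappa> > 0" unfolding \<kappa>_def using MD_tangent_ratio_pos[OF m1 t1] \<rho> by simp
  define K where "K = 2 + 2 / (cmod (\<beta>1 - y))^2"
  have K: "K > 0" unfolding K_def by (simp add: add_pos_nonneg)
  have "\<kappa> / K * herm_norm (p,q) \<le> two_step_gain m1 m2 (p,q)" for p q
  proof -
    define S where "S = (cmod (p*\<beta>1 + q))^2 + (cmod (p*y + q))^2"
    have "herm_norm (p,q) \<le> K * S"
      unfolding K_def S_def using herm_norm_le_two_lines[OF \<open>y \<noteq> \<beta>1\<close>[symmetric] \<beta>1] .
    then have "\<kappa> / K * herm_norm (p,q) \<le> \<kappa> / K * (K * S)"
      using \<kappa> K by (intro mult_left_mono) auto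
    also have "\<dots> = \<kappa> * S" using K by simp
    also have "\<dots> \<le> two_step_gain m1 m2 (p,q)"
      unfolding S_def gain distrib_left \<kappa>_def
      by (intro add_mono mult_right_mono) simp_all
    finally show ?thesis .
  qed
  then show ?thesis using \<kappa> K by (intro exI[of _ "\<kappa> / K"]) auto
qed

lemma two_step_gain_coercive:
  assumes m1: "m1 \<in> MD" and m2: "m2 \<in> MD" and mismatch: "Some (alpha m1) \<noteq> beta m2"
  shows "\<exists>\<epsilon>>0. \<forall>w. two_step_gain m1 m2 w \<ge> \<epsilon> * herm_norm w"
proof -
  define D1 where "D1 = cmod (mob_det m1)"
  define D2 where "D2 = cmod (mob_det m2)"
  have D: "D1 > 0" "D2 > 0" using MD_det_pos m1 m2 unfolding D1_def D2_def by auto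
  have first: "two_step_gain m1 m2 w \<ge> gain_form m1 w / D1" for w
    using MD_gain_form_nonneg[OF m2] D unfolding two_step_gain_def D1_def D2_def by simp
  have second: "two_step_gain m1 m2 w \<ge> gain_form m2 (row_mult w m1) / (D1 * D2)" for w
    using MD_gain_form_nonneg[OF m1] D unfolding two_step_gain_def D1_def D2_def by simp
  consider (nt2) "\<not> tangent m2" | (nt1) "\<not> tangent m1" | (tt) "tangent m1" "tangent m2" by blast
  then show ?thesis
  proof cases
    case nt2
    obtain \<epsilon> where e: "\<epsilon> > 0" "\<And>w. gain_form m2 w \<ge> \<epsilon> * herm_norm w"
      using MD_gain_form_coercive[OF m2 nt2] by blast
    have "\<epsilon> * (D1 * herm_norm w) \<le> gain_form m2 (row_mult w m1)" for w
    proof -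
      have "\<epsilon> * (D1 * herm_norm w) \<le> \<epsilon> * herm_norm (row_mult w m1)"
        using MD_gain_form_nonneg[OF m1, of w] e(1) unfolding herm_norm_row_mult D1_def
        by (intro mult_left_mono) auto
      then show ?thesis using e(2)[of "row_mult w m1"] by linarith
    qed
    then have "\<epsilon> * (D1 * herm_norm w) / (D1 * D2) \<le> gain_form m2 (row_mult w m1) / (D1 * D2)" for w
      using D by (intro divide_right_mono) auto
    moreover have "\<epsilon> * (D1 * herm_norm w) / (D1 * D2) = \<epsilon> / D2 * herm_norm w" for w
      using D by simp
    ultimately have "\<epsilon> / D2 * herm_norm w \<le> two_step_gain m1 m2 w" for w
      using second[of w] by (metis order_trans)
    then show ?thesis using e(1) D by (intro exI[of _ "\<epsilon> / D2"]) auto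
  next
    case nt1
    obtain \<epsilon> where e: "\<epsilon> > 0" "\<And>w. gain_form m1 w \<ge> \<epsilon> * herm_norm w"
      using MD_gain_form_coercive[OF m1 nt1] by blast
    have "\<epsilon> * herm_norm w / D1 \<le> gain_form m1 w / D1" for w
      using e(2)[of w] D by (intro divide_right_mono) auto
    then have "\<epsilon> / D1 * herm_norm w \<le> two_step_gain m1 m2 w" for w
      using first[of w] by (metis order_trans times_divide_eq_left)
    then show ?thesis using e(1) D by (intro exI[of _ "\<epsilon> / D1"]) auto
  next
    case tt
    then show ?thesis using two_step_gain_coercive_tangent m1 m2 mismatch by blast
  qed
qed

section \<open>Composition sequences\<close>

fun mob_mult :: "mob \<Rightarrow> mob \<Rightarrow> mob" where
  "mob_mult (a1,b1,c1,d1) (a2,b2,c2,d2) = (a1*a2 + b1*c2, a1*b2 + b1*d2, c1*a2 + d1*c2, c1*b2 + d1*d2)"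

fun mob_prod :: "(nat \<Rightarrow> mob) \<Rightarrow> nat \<Rightarrow> mob" where
  "mob_prod f 0 = (1,0,0,1)"
| "mob_prod f (Suc n) = mob_mult (mob_prod f n) (f (Suc n))"

fun bottom_row :: "mob \<Rightarrow> complex \<times> complex" where
  "bottom_row (a,b,c,d) = (c,d)"

lemma mob_det_mult: "mob_det (mob_mult m1 m2) = mob_det m1 * mob_det m2"
  by (cases m1; cases m2) (simp add: algebra_simps)

lemma bottom_row_mult: "bottom_row (mob_mult m1 m2) = row_mult (bottom_row m1) m2"
  by (cases m1; cases m2) (simp add: algebra_simps)

lemma circ_s_bottom_row: "circ_s m = herm_norm (bottom_row m)"
  by (cases m) (simp add: circ_s.simps)

lemma mob_apply_mult:
  assumes "mob_apply m2 (Some z) = Some y" "mob_apply m1 (Some y) = Some x"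
  shows "mob_apply (mob_mult m1 m2) (Some z) = Some x"
proof -
  obtain a1 b1 c1 d1 where m1: "m1 = (a1,b1,c1,d1)" by (cases m1) auto
  obtain a2 b2 c2 d2 where m2: "m2 = (a2,b2,c2,d2)" by (cases m2) auto
  have n2: "c2*z + d2 \<noteq> 0" and y: "y = (a2*z + b2)/(c2*z + d2)"
    using assms(1) unfolding m2 by (auto split: if_splits)
  have n1: "c1*y + d1 \<noteq> 0" and x: "x = (a1*y + b1)/(c1*y + d1)"
    using assms(2) unfolding m1 by (auto split: if_splits)
  have "(c1*a2 + d1*c2)*z + (c1*b2 + d1*d2) = (c2*z + d2) * (c1*y + d1)"
    "(a1*a2 + b1*c2)*z + (a1*b2 + b1*d2) = (c2*z + d2) * (a1*y + b1)"
    unfolding y using n2 by (simp_all add: field_simps)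
  then show ?thesis unfolding m1 m2 using n1 n2 x by simp
qed

lemma mob_apply_cdisc_Some:
  assumes "circ_s m > 0" "cmod z \<le> 1"
  shows "\<exists>x. mob_apply m (Some z) = Some x"
proof -
  obtain a b c d where m: "m = (a,b,c,d)" by (cases m) auto
  show ?thesis using no_pole_in_cdisc[of a b c d z] assms unfolding m by simp
qed

definition det_prod :: "(nat \<Rightarrow> mob) \<Rightarrow> nat \<Rightarrow> real" where
  "det_prod f n = cmod (mob_det (mob_prod f n))"

definition inv_radius :: "(nat \<Rightarrow> mob) \<Rightarrow> nat \<Rightarrow> real" where
  "inv_radius f n = herm_norm (bottom_row (mob_prod f n)) / det_prod f n"

definition touch_weight :: "(nat \<Rightarrow> mob) \<Rightarrow> nat \<Rightarrow> real" where
  "touch_weight f n = (case bottom_row (mob_prod f n) of (p,q) \<Rightarrow> (cmod (p * alpha (f n) + q))^2 / det_prod f n)"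

context
  fixes f :: "nat \<Rightarrow> mob"
  assumes MD: "\<forall>n\<ge>1. f n \<in> MD"
begin

lemma MD_Suc: "f (Suc n) \<in> MD"
  using MD by simp

lemma det_prod_Suc: "det_prod f (Suc n) = det_prod f n * cmod (mob_det (f (Suc n)))"
  unfolding det_prod_def by (simp add: mob_det_mult norm_mult)

lemma det_prod_pos: "det_prod f n > 0"
proof (induction n)
  case 0 then show ?case by (simp add: det_prod_def)
next
  case (Suc n) then show ?case using MD_det_pos[OF MD_Suc, of n] by (simp add: det_prod_Suc)
qed

lemma inv_radius_Suc:
  "inv_radius f (Suc n) = inv_radius f n + gain_form (f (Suc n)) (bottom_row (mob_prod f n)) / det_prod f (Suc n)"
  using det_prod_pos[of n] MD_det_pos[OF MD_Suc, of n]
  unfolding inv_radius_def det_prod_Suc by (simp add: bottom_row_mult herm_norm_row_mult field_simps)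

lemma inv_radius_0: "inv_radius f 0 = 1"
  by (simp add: inv_radius_def det_prod_def)

lemma inv_radius_mono: "mono (inv_radius f)"
proof -
  have "0 \<le> gain_form (f (Suc n)) (bottom_row (mob_prod f n)) / det_prod f (Suc n)" for n
    by (intro divide_nonneg_pos MD_gain_form_nonneg[OF MD_Suc] det_prod_pos)
  then show ?thesis unfolding mono_iff_le_Suc inv_radius_Suc by simp
qed

lemma inv_radius_ge_1: "inv_radius f n \<ge> 1"
  using inv_radius_mono inv_radius_0 by (metis le0 monoD)

lemma circ_s_mob_prod_pos: "circ_s (mob_prod f n) > 0"
  using inv_radius_ge_1[of n] det_prod_pos[of n]
  unfolding circ_s_bottom_row inv_radius_def by (simp add: divide_simps split: if_splits)

lemma mob_ok_mob_prod: "mob_ok (mob_prod f n)"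
  using det_prod_pos[of n] unfolding det_prod_def mob_ok_det by auto

lemma comp_seq_eq_mob_prod: "cmod z \<le> 1 \<Longrightarrow> comp_seq f n (Some z) = mob_apply (mob_prod f n) (Some z)"
proof (induction n arbitrary: z)
  case 0 then show ?case by simp
next
  case (Suc n)
  obtain y where y: "mob_apply (f (Suc n)) (Some z) = Some y" "cmod y \<le> 1"
    using MD_maps_cdisc[OF MD_Suc Suc.prems] by blast
  obtain x where x: "mob_apply (mob_prod f n) (Some y) = Some x"
    using mob_apply_cdisc_Some[OF circ_s_mob_prod_pos y(2)] by blast
  have "comp_seq f (Suc n) (Some z) = comp_seq f n (Some y)" using y(1) by simp
  also have "\<dots> = Some x" using Suc.IH[OF y(2)] x by simp
  also have "\<dots> = mob_apply (mob_prod f (Suc n)) (Some z)" using mob_apply_mult[OF y(1) x] by simp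
  finally show ?case .
qed

lemma comp_seq_image: "comp_seq f n ` cdisc = Some ` cball (image_center (mob_prod f n)) (1 / inv_radius f n)"
proof -
  have "comp_seq f n ` cdisc = mob_apply (mob_prod f n) ` cdisc"
    by (rule image_cong) (auto simp: comp_seq_eq_mob_prod)
  also have "\<dots> = Some ` cball (image_center (mob_prod f n)) (image_radius (mob_prod f n))"
    by (rule mob_image_cdisc[OF mob_ok_mob_prod circ_s_mob_prod_pos])
  also have "image_radius (mob_prod f n) = 1 / inv_radius f n"
    unfolding image_radius_def inv_radius_def circ_s_bottom_row det_prod_def by simp
  finally show ?thesis .
qed

lemma comp_seq_image_Suc_subset: "comp_seq f (Suc n) ` cdisc \<subseteq> comp_seq f n ` cdisc"
proof
  fix x assume "x \<in> comp_seq f (Suc n) ` cdisc"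
  then obtain z where z: "cmod z \<le> 1" "x = comp_seq f (Suc n) (Some z)" by auto
  obtain y where y: "mob_apply (f (Suc n)) (Some z) = Some y" "cmod y \<le> 1"
    using MD_maps_cdisc[OF MD_Suc z(1)] by blast
  then show "x \<in> comp_seq f n ` cdisc" using z(2) by simp
qed

lemma limit_disc_type_iff_bounded: "limit_disc_type f \<longleftrightarrow> (\<exists>B. \<forall>n. inv_radius f n \<le> B)"
proof
  assume "limit_disc_type f"
  then obtain c r where r: "r > 0" and eq: "(\<Inter>n\<in>{1..}. comp_seq f n ` cdisc) = Some ` cball c r"
    unfolding limit_disc_type_def by blast
  have "inv_radius f n \<le> max 1 (1/r)" for n
  proof (cases "n = 0")
    case True then show ?thesis using inv_radius_0 by simp
  next
    case False
    then have "Some ` cball c r \<subseteq> comp_seq f n ` cdisc" unfolding eq[symmetric] by auto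
    then have "cball c r \<subseteq> cball (image_center (mob_prod f n)) (1 / inv_radius f n)"
      unfolding comp_seq_image by (simp add: inj_image_subset_iff)
    then have "dist c (image_center (mob_prod f n)) + r \<le> 1 / inv_radius f n"
      using r by (auto simp: cball_subset_cball_iff)
    then have "r \<le> 1 / inv_radius f n" using zero_le_dist[of c "image_center (mob_prod f n)"] by linarith
    then have "inv_radius f n \<le> 1 / r" using r inv_radius_ge_1[of n] by (simp add: field_simps)
    then show ?thesis by simp
  qed
  then show "\<exists>B. \<forall>n. inv_radius f n \<le> B" by blast
next
  assume "\<exists>B. \<forall>n. inv_radius f n \<le> B"
  then obtain B where B: "\<And>n. inv_radius f n \<le> B" by blast
  have "B \<ge> 1" using B[of 0] inv_radius_0 by simp
  have "cball (image_center (mob_prod f (Suc n))) (1 / inv_radius f (Suc n))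
      \<subseteq> cball (image_center (mob_prod f n)) (1 / inv_radius f n)" for n
    using comp_seq_image_Suc_subset[of n] unfolding comp_seq_image by (simp add: inj_image_subset_iff)
  moreover have "1 / inv_radius f n \<ge> 1 / B" for n
    using B[of n] inv_radius_ge_1[of n] by (simp add: frac_le)
  moreover have "1 / B > 0" using \<open>B \<ge> 1\<close> by simp
  ultimately obtain c r where "r > 0"
    "(\<Inter>n\<in>{1..}. cball (image_center (mob_prod f n)) (1 / inv_radius f n)) = cball c r"
    using nested_cballs_Inter[of "\<lambda>n. image_center (mob_prod f n)" "\<lambda>n. 1 / inv_radius f n" "1 / B"]
    by blast
  moreover have "(\<Inter>n\<in>{1..}. comp_seq f n ` cdisc)
      = Some ` (\<Inter>n\<in>{1..}. cball (image_center (mob_prod f n)) (1 / inv_radius f n))"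
    unfolding comp_seq_image by (rule image_INT[symmetric]) auto
  ultimately show "limit_disc_type f" unfolding limit_disc_type_def by auto
qed

section \<open>Mismatches force unbounded growth\<close>

lemma inv_radius_two_step:
  "inv_radius f (Suc (Suc k)) = inv_radius f k
     + two_step_gain (f (Suc k)) (f (Suc (Suc k))) (bottom_row (mob_prod f k)) / det_prod f k"
  using det_prod_pos[of k] MD_det_pos[OF MD_Suc, of k] MD_det_pos[OF MD_Suc, of "Suc k"]
  unfolding inv_radius_Suc det_prod_Suc two_step_gain_def by (simp add: bottom_row_mult field_simps)

lemma inv_radius_growth_at_mismatch:
  assumes "finite (f ` {1..})"
  shows "\<exists>\<epsilon>>0. \<forall>k. Some (alpha (f (Suc k))) \<noteq> beta (f (Suc (Suc k)))
           \<longrightarrow> inv_radius f (Suc (Suc k)) \<ge> (1 + \<epsilon>) * inv_radius f k"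
proof -
  define S where "S = {(f (Suc k), f (Suc (Suc k))) | k. Some (alpha (f (Suc k))) \<noteq> beta (f (Suc (Suc k)))}"
  have "S \<subseteq> f ` {1..} \<times> f ` {1..}" unfolding S_def by fastforce
  then have "finite S" using assms finite_subset by blast
  define P where "P x \<epsilon> \<longleftrightarrow> (\<forall>w. herm_norm w \<ge> 0 \<longrightarrow> two_step_gain (fst x) (snd x) w \<ge> \<epsilon> * herm_norm w)"
    for x \<epsilon>
  have "\<exists>\<epsilon>>0. \<forall>x\<in>S. P x \<epsilon>"
  proof (rule finite_uniform_pos[OF \<open>finite S\<close>])
    show "P x \<epsilon>'" if "P x \<epsilon>" "0 < \<epsilon>'" "\<epsilon>' \<le> \<epsilon>" for x \<epsilon> \<epsilon>'
      using that unfolding P_def by (meson mult_right_mono order_trans)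
    show "\<forall>x\<in>S. \<exists>\<epsilon>>0. P x \<epsilon>"
    proof
      fix x assume "x \<in> S"
      then obtain k where x: "x = (f (Suc k), f (Suc (Suc k)))"
        and mismatch: "Some (alpha (f (Suc k))) \<noteq> beta (f (Suc (Suc k)))" unfolding S_def by blast
      have "\<exists>\<epsilon>>0. \<forall>w. two_step_gain (f (Suc k)) (f (Suc (Suc k))) w \<ge> \<epsilon> * herm_norm w"
        by (rule two_step_gain_coercive[OF MD_Suc MD_Suc mismatch])
      then show "\<exists>\<epsilon>>0. P x \<epsilon>" unfolding P_def x fst_conv snd_conv by blast
    qed
  qed
  then obtain \<epsilon> where \<epsilon>: "\<epsilon> > 0" "\<forall>x\<in>S. P x \<epsilon>" by blast
  have "inv_radius f (Suc (Suc k)) \<ge> (1 + \<epsilon>) * inv_radius f k"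
    if "Some (alpha (f (Suc k))) \<noteq> beta (f (Suc (Suc k)))" for k
  proof -
    have "(f (Suc k), f (Suc (Suc k))) \<in> S" unfolding S_def using that by blast
    moreover have "herm_norm (bottom_row (mob_prod f k)) \<ge> 0"
      using circ_s_mob_prod_pos[of k] unfolding circ_s_bottom_row by simp
    ultimately have "two_step_gain (f (Suc k)) (f (Suc (Suc k))) (bottom_row (mob_prod f k))
        \<ge> \<epsilon> * herm_norm (bottom_row (mob_prod f k))"
      using \<epsilon>(2) unfolding P_def by fastforce
    then have "\<epsilon> * herm_norm (bottom_row (mob_prod f k)) / det_prod f k
        \<le> two_step_gain (f (Suc k)) (f (Suc (Suc k))) (bottom_row (mob_prod f k)) / det_prod f k"
      using det_prod_pos[of k] by (intro divide_right_mono) auto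
    moreover have "\<epsilon> * herm_norm (bottom_row (mob_prod f k)) / det_prod f k = \<epsilon> * inv_radius f k"
      unfolding inv_radius_def by simp
    ultimately show ?thesis unfolding inv_radius_two_step by (simp add: algebra_simps)
  qed
  then show ?thesis using \<epsilon>(1) by blast
qed

lemma inv_radius_unbounded:
  assumes "finite (f ` {1..})"
    and mismatches: "\<not> (\<forall>\<^sub>F n in sequentially. Some (alpha (f (n - 1))) = beta (f n))"
  shows "\<not> (\<exists>B. \<forall>n. inv_radius f n \<le> B)"
proof
  assume "\<exists>B. \<forall>n. inv_radius f n \<le> B"
  then obtain B where B: "\<And>n. inv_radius f n \<le> B" by blast
  obtain \<epsilon> where \<epsilon>: "\<epsilon> > 0" and grow: "\<And>k. Some (alpha (f (Suc k))) \<noteq> beta (f (Suc (Suc k)))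
      \<Longrightarrow> inv_radius f (Suc (Suc k)) \<ge> (1 + \<epsilon>) * inv_radius f k"
    using inv_radius_growth_at_mismatch[OF assms(1)] by blast
  have frequent: "\<exists>k\<ge>N. Some (alpha (f (Suc k))) \<noteq> beta (f (Suc (Suc k)))" for N
  proof -
    obtain n where "n \<ge> N + 2" "Some (alpha (f (n - 1))) \<noteq> beta (f n)"
      using mismatches unfolding eventually_sequentially by blast
    then show ?thesis by (intro exI[of _ "n - 2"]) (auto simp: Suc_diff_Suc numeral_2_eq_2)
  qed
  have "\<exists>n. inv_radius f n \<ge> (1 + \<epsilon>)^j" for j
  proof (induction j)
    case 0 then show ?case using inv_radius_0 by (intro exI[of _ 0]) simp
  next
    case (Suc j)
    then obtain n where n: "inv_radius f n \<ge> (1 + \<epsilon>)^j" by blast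
    obtain k where k: "k \<ge> n" "Some (alpha (f (Suc k))) \<noteq> beta (f (Suc (Suc k)))"
      using frequent by blast
    have "(1 + \<epsilon>) * (1 + \<epsilon>)^j \<le> (1 + \<epsilon>) * inv_radius f k"
      using n monoD[OF inv_radius_mono k(1)] \<epsilon> by (simp add: mult_left_mono)
    then show ?case using grow[OF k(2)] by (intro exI[of _ "Suc (Suc k)"]) simp
  qed
  moreover obtain j where "B < (1 + \<epsilon>)^j" using real_arch_pow[of "1 + \<epsilon>" B] \<epsilon> by auto
  ultimately show False using B by (meson not_le order_trans)
qed

section \<open>Matching tangencies\<close>

lemma eventually_matching_tangent:
  assumes "\<forall>\<^sub>F n in sequentially. Some (alpha (f (n - 1))) = beta (f n)"
  obtains K where "\<And>i. tangent (f (Suc (K + i)))"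
    "\<And>i. alpha (f (K + i)) = touch_point (f (Suc (K + i)))"
proof -
  obtain N where N: "\<And>n. n \<ge> N \<Longrightarrow> Some (alpha (f (n - 1))) = beta (f n)"
    using assms unfolding eventually_sequentially by blast
  define K where "K = max N 2 - 1"
  have match: "Some (alpha (f (K + i))) = beta (f (Suc (K + i)))" for i
    using N[of "Suc (K + i)"] unfolding K_def by simp
  then have tangent: "tangent (f (Suc (K + i)))" for i
    using alpha_beta_not_tangent(2) by (metis option.distinct(1))
  show ?thesis
  proof
    show "tangent (f (Suc (K + i)))" for i by (rule tangent)
    show "alpha (f (K + i)) = touch_point (f (Suc (K + i)))" for i
      using match[of i] MD_tangent_points(4)[OF MD_Suc tangent] by simp
  qed
qed

lemma touch_weight_pos: "touch_weight f n > 0"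
proof (cases n)
  case 0
  then show ?thesis by (simp add: touch_weight_def det_prod_def)
next
  case (Suc k)
  obtain a b c d where M: "mob_prod f n = (a,b,c,d)" by (cases "mob_prod f n") auto
  have "f n \<in> MD" using MD Suc by simp
  then have "c * alpha (f n) + d \<noteq> 0"
    using no_pole_in_cdisc circ_s_mob_prod_pos[of n] MD_alpha_in_cdisc unfolding M by simp
  then show ?thesis using det_prod_pos[of n] unfolding touch_weight_def M by simp
qed

lemma inv_radius_Suc_tangent:
  assumes t: "tangent (f (Suc n))" and match: "alpha (f n) = touch_point (f (Suc n))"
  shows "inv_radius f (Suc n) = inv_radius f n + tangent_ratio (f (Suc n)) * touch_weight f n"
proof -
  obtain p q where pq: "bottom_row (mob_prod f n) = (p,q)" by (cases "bottom_row (mob_prod f n)") auto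
  show ?thesis
    unfolding inv_radius_Suc pq MD_gain_form_tangent[OF MD_Suc t] det_prod_Suc
      tangent_ratio_def touch_weight_def match[symmetric]
    by simp
qed

lemma touch_weight_Suc:
  assumes t: "tangent (f (Suc n))" and match: "alpha (f n) = touch_point (f (Suc n))"
  shows "touch_weight f (Suc n) = gamma (f (Suc n)) * touch_weight f n"
proof -
  obtain p q where pq: "bottom_row (mob_prod f n) = (p,q)" by (cases "bottom_row (mob_prod f n)") auto
  obtain a b c d where M: "f (Suc n) = (a,b,c,d)" by (cases "f (Suc n)") auto
  define \<alpha> where "\<alpha> = alpha (f (Suc n))"
  have "mob_apply (a,b,c,d) (Some \<alpha>) = Some (touch_point (f (Suc n)))"
    using MD_tangent_points(3)[OF MD_Suc t] unfolding M \<alpha>_def .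
  then have np: "c*\<alpha> + d \<noteq> 0" and image: "(a*\<alpha> + b)/(c*\<alpha> + d) = alpha (f n)"
    unfolding match by (simp_all split: if_splits)
  have "bottom_row (mob_prod f (Suc n)) = (p*a + q*c, p*b + q*d)" using pq M by (simp add: bottom_row_mult)
  moreover have "(p*a + q*c)*\<alpha> + (p*b + q*d) = (c*\<alpha> + d) * (p * alpha (f n) + q)"
    unfolding image[symmetric] using np by (simp add: field_simps)
  ultimately show ?thesis
    unfolding touch_weight_def det_prod_Suc M gamma_eq pq \<alpha>_def[unfolded M, symmetric]
    by (simp add: norm_mult power_mult_distrib)
qed

lemma tangent_ratio_bounds:
  assumes "finite (f ` {1..})"
  obtains kmin kmax where "kmin > 0"
    "\<And>n. n \<ge> 1 \<Longrightarrow> tangent (f n) \<Longrightarrow> kmin \<le> tangent_ratio (f n) \<and> tangent_ratio (f n) \<le> kmax"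
proof -
  define R where "R = insert 1 (tangent_ratio ` {m \<in> f ` {1..}. tangent m})"
  have "{m \<in> f ` {1..}. tangent m} \<subseteq> f ` {1..}" by blast
  then have R_fin: "finite R" unfolding R_def using assms finite_subset by blast
  have R_mem: "tangent_ratio (f n) \<in> R" if "n \<ge> 1" "tangent (f n)" for n
  proof -
    have "f n \<in> f ` {1..}" by (rule imageI) (use that(1) in simp)
    then show ?thesis unfolding R_def using that(2) by blast
  qed
  have R_pos: "r > 0" if r_in: "r \<in> R" for r
  proof (cases "r = 1")
    case False
    then have "r \<in> tangent_ratio ` {m \<in> f ` {1..}. tangent m}" using r_in unfolding R_def by simp
    then obtain m where r: "r = tangent_ratio m" and "m \<in> {m \<in> f ` {1..}. tangent m}"
      by (rule imageE)
    then have t: "tangent m" and "m \<in> f ` {1..}" by simp_all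
    then have "m \<in> MD" using MD by auto
    then show ?thesis using MD_tangent_ratio_pos[OF _ t] r by simp
  qed simp
  have "Min R \<in> R" using R_fin unfolding R_def by (intro Min_in) auto
  then have "Min R > 0" by (rule R_pos)
  moreover have "Min R \<le> tangent_ratio (f n) \<and> tangent_ratio (f n) \<le> Max R"
    if "n \<ge> 1" "tangent (f n)" for n
    using R_fin R_mem[OF that] by (simp add: Min_le Max_ge)
  ultimately show ?thesis by (rule that)
qed

lemma bounded_iff_summable_if_matching:
  assumes fin: "finite (f ` {1..})"
    and matching: "\<forall>\<^sub>F n in sequentially. Some (alpha (f (n - 1))) = beta (f n)"
  shows "(\<exists>B. \<forall>n. inv_radius f n \<le> B) \<longleftrightarrow> summable (\<lambda>n. \<Prod>i\<in>{1..Suc n}. gamma (f i))"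
proof -
  obtain K where tangent: "\<And>i. tangent (f (Suc (K + i)))"
    and match: "\<And>i. alpha (f (K + i)) = touch_point (f (Suc (K + i)))"
    using eventually_matching_tangent[OF matching] by blast
  define T where "T n = (\<Prod>i\<in>{1..n}. gamma (f i))" for n
  have T_pos: "T n > 0" for n unfolding T_def using MD_gamma_pos MD by (intro prod_pos) auto
  have T_Suc: "T (Suc n) = T n * gamma (f (Suc n))" for n unfolding T_def by simp
  define C where "C = touch_weight f K / T K"
  have C: "C > 0" unfolding C_def using touch_weight_pos T_pos by simp
  have weight: "touch_weight f (K + i) = C * T (K + i)" for i
  proof (induction i)
    case 0 then show ?case unfolding C_def using T_pos[of K] by simp
  next
    case (Suc i)
    then show ?case using touch_weight_Suc[OF tangent match, of i] T_Suc[of "K + i"] by simp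
  qed
  have incr: "inv_radius f (K + j)
      = inv_radius f K + (\<Sum>i<j. tangent_ratio (f (Suc (K + i))) * (C * T (K + i)))" for j
    by (induction j) (simp_all add: inv_radius_Suc_tangent[OF tangent match] weight)
  obtain kmin kmax where "kmin > 0"
    and k: "\<And>n. n \<ge> 1 \<Longrightarrow> tangent (f n) \<Longrightarrow> kmin \<le> tangent_ratio (f n) \<and> tangent_ratio (f n) \<le> kmax"
    using tangent_ratio_bounds[OF fin] by blast
  have "(\<exists>B. \<forall>n. inv_radius f n \<le> B) \<longleftrightarrow> summable (\<lambda>i. C * T (K + i))"
  proof (rule bounded_iff_summable_weighted[OF inv_radius_mono incr])
    show "C * T (K + i) > 0" for i using C T_pos by simp
    show "kmin \<le> tangent_ratio (f (Suc (K + i)))" for i using k[OF _ tangent] by simp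
    show "tangent_ratio (f (Suc (K + i))) \<le> kmax" for i using k[OF _ tangent] by simp
  qed (rule \<open>kmin > 0\<close>)
  also have "\<dots> \<longleftrightarrow> summable (\<lambda>i. T (i + K))"
    using C by (simp add: add.commute[of K])
  also have "\<dots> \<longleftrightarrow> summable (\<lambda>n. T (Suc n))"
    by (simp only: summable_iff_shift summable_Suc_iff)
  finally show ?thesis unfolding T_def .
qed

end

theorem theorem1p2:
  fixes \<F> :: "mob set" and f :: "nat \<Rightarrow> mob"
  assumes "finite \<F>" and "\<F> \<subseteq> MD"
    and "\<forall>n\<ge>1. f n \<in> \<F>"
  shows "limit_disc_type f \<longleftrightarrow>
           ((\<forall>\<^sub>F n in sequentially. Some (alpha (f (n - 1))) = beta (f n)) \<and>
            summable (\<lambda>n. \<Prod>i\<in>{1..Suc n}. gamma (f i)))"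
proof -
  have MD: "\<forall>n\<ge>1. f n \<in> MD" using assms(2,3) by auto
  have "f ` {1..} \<subseteq> \<F>" using assms(3) by auto
  then have fin: "finite (f ` {1..})" using assms(1) finite_subset by blast
  show ?thesis
    unfolding limit_disc_type_iff_bounded[OF MD]
    using inv_radius_unbounded[OF MD fin] bounded_iff_summable_if_matching[OF MD fin] by blast
qed

end
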